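(* Let $0<\epsilon<1/3$. Suppose $G=(U\cup V,E)$ is a bipartite graph and $H=n\otimes G$ where $n=\max\{|U|,|V|\}$. If $H$ has an $\epsilon$-regular partition of size $t$, then $G$ has a $36\epsilon^{1/18}$-regular partition of size at most $2t+2$.
   Context: For a bipartite graph $G=(U\cup V,E)$ and $n\ge1$, $n\otimes G$ is the $3$-graph with vertex set $U\cup V\cup\{c_1,\dots,c_n\}$ ($c_i$ new vertices) and edge set $\{\{c_i,u,w\}: i\in[n], uw\in E\}$. Graph regularity: $d_G(X,Y)=|\{(x,y)\in X\times Y:xy\in E\}|/(|X||Y|)$; $(X,Y)$ is $\eta$-regular if $|d_G(X,Y)-d_G(X',Y')|\le\eta$ for all $X'\subseteq X,Y'\subseteq Y$ with $|X'|\ge\eta|X|,|Y'|\ge\eta|Y|$; a partition $\mathcal P$ of $V(G)$ (not necessarily equitable; pairs $(X,X)$ allowed) is $\eta$-regular if at least $(1-\eta)|V(G)|^2$ pairs of $V(G)^2$ lie in $X\times Y$ for some $\eta$-regular $(X,Y)\in\mathcal P^2$. $3$-graph regularity: $d_H(X,Y,Z)=|\{(x,y,z)\in X\times Y\times Z:\{x,y,z\}\in E(H)\}|/(|X||Y||Z|)$; $(X,Y,Z)$ is $\epsilon$-regular if $|d_H(X,Y,Z)-d_H(X',Y',Z')|\le\epsilon$ for all subsets of sizes at least $\epsilon|X|,\epsilon|Y|,\epsilon|Z|$; a partition $\mathcal P$ of $V(H)$ is $\epsilon$-regular if at least $(1-\epsilon)|V(H)|^3$ triples of $V(H)^3$ lie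 in $X\times Y\times Z$ for some $\epsilon$-regular $(X,Y,Z)\in\mathcal P^3$. *)

theory Defs
  imports Complex_Main
begin

definition is_partition :: "'v set set \<Rightarrow> 'v set \<Rightarrow> bool" where
  "is_partition P S \<longleftrightarrow> (\<forall>X\<in>P. X \<noteq> {}) \<and> (\<forall>X\<in>P. \<forall>Y\<in>P. X \<noteq> Y \<longrightarrow> X \<inter> Y = {}) \<and> \<Union>P = S"

definition gdens :: "'v set set \<Rightarrow> 'v set \<Rightarrow> 'v set \<Rightarrow> real" where
  "gdens E X Y = real (card {(x,y) \<in> X \<times> Y. {x,y} \<in> E}) / (real (card X) * real (card Y))"

definition g_regular_pair :: "'v set set \<Rightarrow> real \<Rightarrow> 'v set \<Rightarrow> 'v set \<Rightarrow> bool" where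
  "g_regular_pair E \<eta> X Y \<longleftrightarrow>
     (\<forall>X' Y'. X' \<subseteq> X \<and> Y' \<subseteq> Y \<and> real (card X') \<ge> \<eta> * real (card X) \<and> real (card Y') \<ge> \<eta> * real (card Y)
        \<longrightarrow> \<bar>gdens E X Y - gdens E X' Y'\<bar> \<le> \<eta>)"

definition g_regular_partition :: "'v set set \<Rightarrow> 'v set \<Rightarrow> real \<Rightarrow> 'v set set \<Rightarrow> bool" where
  "g_regular_partition E S \<eta> P \<longleftrightarrow>
     real (card {(x,y) \<in> S \<times> S. \<exists>X\<in>P. \<exists>Y\<in>P. g_regular_pair E \<eta> X Y \<and> x \<in> X \<and> y \<in> Y})
       \<ge> (1 - \<eta>) * real (card S) ^ 2"

definition hdens :: "'v set set \<Rightarrow> 'v set \<Rightarrow> 'v set \<Rightarrow> 'v set \<Rightarrow> real" where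
  "hdens F X Y Z = real (card {(x,y,z) \<in> X \<times> Y \<times> Z. {x,y,z} \<in> F}) /
      (real (card X) * real (card Y) * real (card Z))"

definition h_regular_triple :: "'v set set \<Rightarrow> real \<Rightarrow> 'v set \<Rightarrow> 'v set \<Rightarrow> 'v set \<Rightarrow> bool" where
  "h_regular_triple F \<epsilon> X Y Z \<longleftrightarrow>
     (\<forall>X' Y' Z'. X' \<subseteq> X \<and> Y' \<subseteq> Y \<and> Z' \<subseteq> Z \<and> real (card X') \<ge> \<epsilon> * real (card X)
        \<and> real (card Y') \<ge> \<epsilon> * real (card Y) \<and> real (card Z') \<ge> \<epsilon> * real (card Z)
        \<longrightarrow> \<bar>hdens F X Y Z - hdens F X' Y' Z'\<bar> \<le> \<epsilon>)"

definition h_regular_partition :: "'v set set \<Rightarrow> 'v set \<Rightarrow> real \<Rightarrow> 'v set set \<Rightarrow> bool" where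
  "h_regular_partition F S \<epsilon> P \<longleftrightarrow>
     real (card {(x,y,z) \<in> S \<times> S \<times> S. \<exists>X\<in>P. \<exists>Y\<in>P. \<exists>Z\<in>P.
         h_regular_triple F \<epsilon> X Y Z \<and> x \<in> X \<and> y \<in> Y \<and> z \<in> Z})
       \<ge> (1 - \<epsilon>) * real (card S) ^ 3"

definition bipartite :: "'a set \<Rightarrow> 'a set \<Rightarrow> 'a set set \<Rightarrow> bool" where
  "bipartite U V E \<longleftrightarrow> finite U \<and> finite V \<and> U \<inter> V = {} \<and> E \<subseteq> {{u,w} | u w. u \<in> U \<and> w \<in> V}"

text \<open>The 3-graph n \<otimes> G: original vertices Inl v, new vertices c_i = Inr i, i in {1..n}.\<close>
definition tensor_verts :: "nat \<Rightarrow> 'a set \<Rightarrow> 'a set \<Rightarrow> ('a + nat) set" where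
  "tensor_verts n U V = Inl ` (U \<union> V) \<union> Inr ` {1..n}"

definition tensor_edges :: "nat \<Rightarrow> 'a set set \<Rightarrow> ('a + nat) set set" where
  "tensor_edges n E = {{Inr i, Inl u, Inl w} | i u w. i \<in> {1..n} \<and> {u,w} \<in> E}"

end

theory Submission
  imports Defs
begin

text \<open>
  Cut each part X of the \<epsilon>-regular partition Q of H = n \<otimes> G into its traces X \<inter> U and
  X \<inter> V; this gives a partition P of U \<union> V with at most 2t parts. Pairs of parts on the same
  side span no edges and are regular, so only cross pairs (X \<inter> U, Y \<inter> V) can be irregular.
  If such a pair is irregular and both traces fill at least a \<delta> = \<epsilon>^(1/18) fraction of X and Y, then
  (X, Y, Z) is \<epsilon>-irregular in H for every part Z containing at least an \<epsilon>-fraction of new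
  vertices c_i: for a set C of new vertices the density of (A, B, C) in H is the density of
  (A, B) in G, so a witness of irregularity in G lifts to H. Such parts Z cover at least
  n - \<epsilon>|V(H)| \<ge> n/2 vertices, hence the \<epsilon>-regularity of Q bounds the mass of these pairs
  by 24\<epsilon>|U \<union> V|^2, while the pairs with a thin trace have mass at most 2\<delta>|U \<union> V|^2.
\<close>

lemma gdens_commute: "gdens E X Y = gdens E Y X"
proof -
  have "{(x,y) \<in> Y \<times> X. {x,y} \<in> E} = prod.swap ` {(x,y) \<in> X \<times> Y. {x,y} \<in> E}"
    by (auto simp: insert_commute image_iff)
  then have "card {(x,y) \<in> Y \<times> X. {x,y} \<in> E} = card {(x,y) \<in> X \<times> Y. {x,y} \<in> E}"
    by (simp add: card_image)
  then show ?thesis unfolding gdens_def by (simp add: mult.commute)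
qed

lemma g_regular_pair_commute: "g_regular_pair E \<eta> X Y \<longleftrightarrow> g_regular_pair E \<eta> Y X"
  unfolding g_regular_pair_def by (metis gdens_commute)

lemma g_regular_pair_if_edgeless:
  assumes "\<And>x y. x \<in> X \<Longrightarrow> y \<in> Y \<Longrightarrow> {x,y} \<notin> E" and "0 \<le> \<eta>"
  shows "g_regular_pair E \<eta> X Y"
proof -
  have "gdens E X' Y' = 0" if "X' \<subseteq> X" "Y' \<subseteq> Y" for X' Y'
  proof -
    have "{(x,y) \<in> X' \<times> Y'. {x,y} \<in> E} = {}" using assms(1) that by blast
    then show ?thesis unfolding gdens_def by (metis card.empty of_nat_0 div_0)
  qed
  then show ?thesis unfolding g_regular_pair_def using assms(2) by auto
qed

lemma bipartite_no_edge_within_side: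
  assumes "bipartite U V E" "W = U \<or> W = V" "x \<in> W" "y \<in> W"
  shows "{x,y} \<notin> E"
proof
  assume "{x,y} \<in> E"
  then obtain u w where "{x,y} = {u,w}" "u \<in> U" "w \<in> V"
    using assms(1) unfolding bipartite_def by blast
  then show False using assms unfolding bipartite_def by (auto simp: doubleton_eq_iff)
qed

lemma g_regular_partition_if_ge_1:
  assumes "1 \<le> \<eta>" shows "g_regular_partition E S \<eta> P"
proof -
  have "(1 - \<eta>) * real (card S) ^ 2 \<le> 0" using assms by (simp add: mult_nonpos_nonneg)
  then show ?thesis
    unfolding g_regular_partition_def using order_trans[OF _ of_nat_0_le_iff] by blast
qed

lemma partition_part_unique:
  assumes "is_partition P S" "A \<in> P" "B \<in> P" "x \<in> A" "x \<in> B"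
  shows "A = B"
  using assms unfolding is_partition_def by blast

lemma finite_partition:
  assumes "is_partition P S" "finite S"
  shows "finite P" and "A \<in> P \<Longrightarrow> finite A"
proof -
  have "P \<subseteq> Pow S" using assms(1) unfolding is_partition_def by blast
  then show "finite P" using assms(2) by (simp add: finite_subset)
  show "A \<in> P \<Longrightarrow> finite A"
    using assms Union_upper[of A P] finite_subset unfolding is_partition_def by metis
qed

lemma sum_card_inter_partition:
  assumes "is_partition P S" "finite S" "W \<subseteq> S"
  shows "(\<Sum>A\<in>P. card (A \<inter> W)) = card W"
proof -
  have "card (\<Union>A\<in>P. A \<inter> W) = (\<Sum>A\<in>P. card (A \<inter> W))"
  proof (rule card_UN_disjoint)
    show "finite P" "\<forall>A\<in>P. finite (A \<inter> W)" using finite_partition[OF assms(1,2)] by auto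
    show "\<forall>A\<in>P. \<forall>B\<in>P. A \<noteq> B \<longrightarrow> A \<inter> W \<inter> (B \<inter> W) = {}"
      using assms(1) unfolding is_partition_def by blast
  qed
  moreover have "(\<Union>A\<in>P. A \<inter> W) = W" using assms unfolding is_partition_def by blast
  ultimately show ?thesis by simp
qed

lemma sum_card_partition:
  assumes "is_partition P S" "finite S"
  shows "(\<Sum>A\<in>P. card A) = card S"
proof -
  have "(\<Sum>A\<in>P. card A) = (\<Sum>A\<in>P. card (A \<inter> S))"
    using assms(1) unfolding is_partition_def
    by (intro sum.cong refl) (metis Int_absorb2 Union_upper)
  then show ?thesis using sum_card_inter_partition[OF assms order_refl] by simp
qed

lemma sum_filter_pairs:
  assumes "finite P"
  shows "(\<Sum>T\<in>{T \<in> P \<times> P. R T}. f T) = (\<Sum>A\<in>P. \<Sum>B\<in>P. if R (A,B) then f (A,B) else 0)"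
  using assms by (simp add: sum.inter_filter sum.cartesian_product')

lemma sum_filter_triples:
  assumes "finite P"
  shows "(\<Sum>T\<in>{T \<in> P \<times> P \<times> P. R T}. f T)
    = (\<Sum>A\<in>P. \<Sum>B\<in>P. \<Sum>C\<in>P. if R (A,B,C) then f (A,B,C) else 0)"
  using assms by (simp add: sum.inter_filter sum.cartesian_product')

definition g_irregular_mass :: "'v set set \<Rightarrow> real \<Rightarrow> 'v set set \<Rightarrow> real" where
  "g_irregular_mass E \<eta> P =
     (\<Sum>A\<in>P. \<Sum>B\<in>P. if g_regular_pair E \<eta> A B then 0 else real (card A) * real (card B))"

definition h_irregular_mass :: "'v set set \<Rightarrow> real \<Rightarrow> 'v set set \<Rightarrow> real" where
  "h_irregular_mass F \<epsilon> P =
     (\<Sum>A\<in>P. \<Sum>B\<in>P. \<Sum>C\<in>P. if h_regular_triple F \<epsilon> A B C then 0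
        else real (card A) * real (card B) * real (card C))"

lemma g_regular_partition_if_irregular_mass_le:
  assumes P: "is_partition P S" and "finite S"
    and mass: "g_irregular_mass E \<eta> P \<le> \<eta> * real (card S) ^ 2"
  shows "g_regular_partition E S \<eta> P"
proof -
  define cov where "cov = {(x,y) \<in> S \<times> S. \<exists>A\<in>P. \<exists>B\<in>P. g_regular_pair E \<eta> A B \<and> x \<in> A \<and> y \<in> B}"
  define I where "I = {T \<in> P \<times> P. \<not> g_regular_pair E \<eta> (fst T) (snd T)}"
  have finP: "finite P" using finite_partition[OF P \<open>finite S\<close>] by blast
  have "S \<times> S - cov \<subseteq> (\<Union>T\<in>I. fst T \<times> snd T)"
  proof
    fix p assume p: "p \<in> S \<times> S - cov"
    then obtain x y where "p = (x,y)" "x \<in> S" "y \<in> S" by blast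
    moreover obtain A B where "A \<in> P" "B \<in> P" "x \<in> A" "y \<in> B"
      using P \<open>x \<in> S\<close> \<open>y \<in> S\<close> unfolding is_partition_def by blast
    moreover have "\<not> g_regular_pair E \<eta> A B" using p calculation unfolding cov_def by blast
    ultimately have "(A,B) \<in> I" "p \<in> A \<times> B" unfolding I_def by auto
    then show "p \<in> (\<Union>T\<in>I. fst T \<times> snd T)" by force
  qed
  then have "card (S \<times> S - cov) \<le> card (\<Union>T\<in>I. fst T \<times> snd T)"
    using finP finite_partition(2)[OF P \<open>finite S\<close>] unfolding I_def by (intro card_mono) auto
  also have "\<dots> \<le> (\<Sum>T\<in>I. card (fst T \<times> snd T))"
    using finP unfolding I_def by (intro card_UN_le) simp
  finally have "real (card (S \<times> S - cov)) \<le> real (\<Sum>T\<in>I. card (fst T \<times> snd T))"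
    by (simp only: of_nat_le_iff)
  also have "\<dots> = (\<Sum>T\<in>I. real (card (fst T)) * real (card (snd T)))"
    by (simp add: card_cartesian_product)
  also have "\<dots> = g_irregular_mass E \<eta> P"
    unfolding I_def g_irregular_mass_def sum_filter_pairs[OF finP] by (intro sum.cong) auto
  finally have "real (card (S \<times> S - cov)) \<le> \<eta> * real (card S) ^ 2" using mass by linarith
  moreover have "cov \<subseteq> S \<times> S" "finite (S \<times> S)" unfolding cov_def using \<open>finite S\<close> by auto
  ultimately have "real (card (S \<times> S)) - real (card cov) \<le> \<eta> * real (card S) ^ 2"
    by (simp add: card_Diff_subset finite_subset card_mono of_nat_diff)
  then show ?thesis
    unfolding g_regular_partition_def cov_def[symmetric]
    by (simp add: card_cartesian_product power2_eq_square algebra_simps)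
qed

lemma card_UN_part_triples:
  assumes P: "is_partition P S" and "finite S" and I: "I \<subseteq> P \<times> P \<times> P"
  shows "card (\<Union>(A,B,C)\<in>I. A \<times> B \<times> C) = (\<Sum>(A,B,C)\<in>I. card A * card B * card C)"
proof -
  let ?block = "\<lambda>(A,B,C). A \<times> B \<times> C"
  have disjoint: "?block T \<inter> ?block T' = {}" if "T \<in> I" "T' \<in> I" "T \<noteq> T'" for T T'
  proof -
    obtain A B C A' B' C' where T: "T = (A,B,C)" "T' = (A',B',C')" by (cases T, cases T') auto
    have "\<forall>X\<in>P. \<forall>Y\<in>P. X \<noteq> Y \<longrightarrow> X \<inter> Y = {}" using P unfolding is_partition_def by blast
    then have "A \<inter> A' = {} \<or> B \<inter> B' = {} \<or> C \<inter> C' = {}" using that I T by blast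
    then show ?thesis using T by auto
  qed
  have "finite I" using finite_partition(1)[OF P \<open>finite S\<close>] finite_subset[OF I] by simp
  moreover have "\<forall>T\<in>I. finite (?block T)" using finite_partition(2)[OF P \<open>finite S\<close>] I by auto
  ultimately have "card (\<Union>T\<in>I. ?block T) = (\<Sum>T\<in>I. card (?block T))"
    using disjoint by (intro card_UN_disjoint) auto
  then show ?thesis by (simp add: case_prod_beta card_cartesian_product mult.assoc)
qed

lemma h_irregular_mass_le:
  assumes P: "is_partition P S" and "finite S" and regular: "h_regular_partition F S \<epsilon> P"
  shows "h_irregular_mass F \<epsilon> P \<le> \<epsilon> * real (card S) ^ 3"
proof -
  define cov where "cov = {(x,y,z) \<in> S \<times> S \<times> S. \<exists>A\<in>P. \<exists>B\<in>P. \<exists>C\<in>P.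
    h_regular_triple F \<epsilon> A B C \<and> x \<in> A \<and> y \<in> B \<and> z \<in> C}"
  define I where "I = {T \<in> P \<times> P \<times> P. case T of (A,B,C) \<Rightarrow> \<not> h_regular_triple F \<epsilon> A B C}"
  have finP: "finite P" using finite_partition[OF P \<open>finite S\<close>] by blast
  have I_sub: "I \<subseteq> P \<times> P \<times> P" unfolding I_def by blast
  have PS: "\<And>A. A \<in> P \<Longrightarrow> A \<subseteq> S" using P unfolding is_partition_def by blast
  have uncovered: "(\<Union>(A,B,C)\<in>I. A \<times> B \<times> C) \<subseteq> S \<times> S \<times> S - cov"
  proof
    fix p assume "p \<in> (\<Union>(A,B,C)\<in>I. A \<times> B \<times> C)"
    then obtain A B C x y z where T: "A \<in> P" "B \<in> P" "C \<in> P" "\<not> h_regular_triple F \<epsilon> A B C"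
      and p: "p = (x,y,z)" "x \<in> A" "y \<in> B" "z \<in> C" unfolding I_def by auto
    have "p \<notin> cov"
    proof
      assume "p \<in> cov"
      then obtain A' B' C' where "A' \<in> P" "B' \<in> P" "C' \<in> P" "h_regular_triple F \<epsilon> A' B' C'"
        "x \<in> A'" "y \<in> B'" "z \<in> C'" unfolding cov_def p by blast
      with T p show False using partition_part_unique[OF P] by metis
    qed
    then show "p \<in> S \<times> S \<times> S - cov" using T p PS by blast
  qed
  have covS: "cov \<subseteq> S \<times> S \<times> S" and finS3: "finite (S \<times> S \<times> S)"
    unfolding cov_def using \<open>finite S\<close> by auto
  have "h_irregular_mass F \<epsilon> P = (\<Sum>(A,B,C)\<in>I. real (card A) * real (card B) * real (card C))"
    unfolding I_def h_irregular_mass_def sum_filter_triples[OF finP] by (intro sum.cong refl) auto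
  also have "\<dots> = real (card (\<Union>(A,B,C)\<in>I. A \<times> B \<times> C))"
    using card_UN_part_triples[OF P \<open>finite S\<close> I_sub] by (simp add: case_prod_beta)
  also have "\<dots> \<le> real (card (S \<times> S \<times> S - cov))"
    using uncovered finS3 by (simp add: card_mono)
  also have "\<dots> = real (card (S \<times> S \<times> S)) - real (card cov)"
    using covS finS3 by (simp add: card_Diff_subset finite_subset card_mono of_nat_diff)
  finally have "h_irregular_mass F \<epsilon> P \<le> real (card (S \<times> S \<times> S)) - real (card cov)" .
  moreover have "(1 - \<epsilon>) * real (card S) ^ 3 \<le> real (card cov)"
    using regular unfolding h_regular_partition_def cov_def .
  ultimately show ?thesis by (simp add: card_cartesian_product power3_eq_cube algebra_simps)
qed

lemma tensor_edge_iff: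
  assumes "i \<in> {1..n}"
  shows "{Inl a, Inl b, Inr i} \<in> tensor_edges n E \<longleftrightarrow> {a,b} \<in> E"
proof
  assume "{Inl a, Inl b, Inr i} \<in> tensor_edges n E"
  then obtain j u w where h: "{Inl a, Inl b, Inr i} = {Inr j, Inl u, Inl w}" "{u,w} \<in> E"
    unfolding tensor_edges_def by blast
  have "{a,b} = Inl -` {Inl a, Inl b, Inr i}" by auto
  also have "\<dots> = {u,w}" unfolding h(1) by auto
  finally show "{a,b} \<in> E" using h(2) by simp
next
  assume "{a,b} \<in> E"
  moreover have "{Inl a, Inl b, Inr i} = {Inr i, Inl a, Inl b}" by auto
  ultimately show "{Inl a, Inl b, Inr i} \<in> tensor_edges n E"
    unfolding tensor_edges_def using assms by blast
qed

lemma hdens_tensor_edges: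
  assumes "C \<subseteq> Inr ` {1..n}" "finite C" "C \<noteq> {}"
  shows "hdens (tensor_edges n E) (Inl ` A) (Inl ` B) C = gdens E A B"
proof -
  define e where "e = {(x,y) \<in> A \<times> B. {x,y} \<in> E}"
  define f where "f = (\<lambda>((a,b),z). (Inl a, Inl b, z) :: ('a + nat) \<times> ('a + nat) \<times> ('a + nat))"
  have "{(x,y,z) \<in> Inl ` A \<times> Inl ` B \<times> C. {x,y,z} \<in> tensor_edges n E} = f ` (e \<times> C)"
    using assms(1) unfolding e_def f_def by (auto simp: image_iff tensor_edge_iff)
  moreover have "inj_on f (e \<times> C)" unfolding f_def by (auto simp: inj_on_def)
  ultimately have
    "card {(x,y,z) \<in> Inl ` A \<times> Inl ` B \<times> C. {x,y,z} \<in> tensor_edges n E} = card e * card C"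
    by (simp add: card_image card_cartesian_product)
  moreover have "card C > 0" using assms(2,3) by auto
  ultimately show ?thesis unfolding hdens_def gdens_def e_def by (simp add: card_image)
qed

lemma not_h_regular_triple_if_not_g_regular_pair:
  fixes \<epsilon> \<eta> \<gamma> :: real
  assumes irregular: "\<not> g_regular_pair E \<eta> A B"
    and sub: "Inl ` A \<subseteq> X" "Inl ` B \<subseteq> Y" "C \<subseteq> Z"
    and C: "C \<subseteq> Inr ` {1..n}" "finite C" "C \<noteq> {}"
    and large: "\<gamma> * card X \<le> card A" "\<gamma> * card Y \<le> card B" "\<epsilon> * card Z \<le> card C"
    and "0 \<le> \<epsilon>" "2 * \<epsilon> \<le> \<eta>" "\<epsilon> \<le> \<gamma>" "\<epsilon> \<le> \<eta> * \<gamma>"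
  shows "\<not> h_regular_triple (tensor_edges n E) \<epsilon> X Y Z"
proof
  assume regular: "h_regular_triple (tensor_edges n E) \<epsilon> X Y Z"
  from irregular obtain A' B' where AB': "A' \<subseteq> A" "B' \<subseteq> B" "\<eta> * card A \<le> card A'"
    "\<eta> * card B \<le> card B'" "\<bar>gdens E A B - gdens E A' B'\<bar> > \<eta>"
    unfolding g_regular_pair_def not_all not_imp not_le by blast
  have "0 \<le> \<eta>" "0 \<le> \<gamma>" using assms by linarith+
  have close: "\<bar>hdens (tensor_edges n E) X Y Z - gdens E A\<^sub>0 B\<^sub>0\<bar> \<le> \<epsilon>"
    if "A\<^sub>0 \<subseteq> A" "B\<^sub>0 \<subseteq> B" "\<epsilon> * card X \<le> card A\<^sub>0" "\<epsilon> * card Y \<le> card B\<^sub>0" for A\<^sub>0 B\<^sub>0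
  proof -
    have inl_sub: "Inl ` A\<^sub>0 \<subseteq> X" "Inl ` B\<^sub>0 \<subseteq> Y" using that(1,2) sub by blast+
    have "\<bar>hdens (tensor_edges n E) X Y Z - hdens (tensor_edges n E) (Inl ` A\<^sub>0) (Inl ` B\<^sub>0) C\<bar> \<le> \<epsilon>"
      by (rule regular[unfolded h_regular_triple_def, rule_format], intro conjI)
        (use inl_sub sub(3) large(3) that(3,4) in \<open>simp_all add: card_image\<close>)
    then show ?thesis unfolding hdens_tensor_edges[OF C] .
  qed
  have "\<epsilon> * card X \<le> \<gamma> * card X" "\<epsilon> * card Y \<le> \<gamma> * card Y"
    using \<open>\<epsilon> \<le> \<gamma>\<close> by (simp_all add: mult_right_mono)
  then have "\<bar>hdens (tensor_edges n E) X Y Z - gdens E A B\<bar> \<le> \<epsilon>"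
    using close[OF order_refl order_refl] large by linarith
  moreover have "\<epsilon> * card X \<le> card A'" "\<epsilon> * card Y \<le> card B'"
  proof -
    have "\<epsilon> * card X \<le> \<eta> * (\<gamma> * card X)" "\<epsilon> * card Y \<le> \<eta> * (\<gamma> * card Y)"
      using \<open>\<epsilon> \<le> \<eta> * \<gamma>\<close> by (simp_all add: mult_right_mono flip: mult.assoc)
    moreover have "\<eta> * (\<gamma> * card X) \<le> \<eta> * card A" "\<eta> * (\<gamma> * card Y) \<le> \<eta> * card B"
      using large \<open>0 \<le> \<eta>\<close> by (simp_all add: mult_left_mono)
    ultimately show "\<epsilon> * card X \<le> card A'" "\<epsilon> * card Y \<le> card B'" using AB' by linarith+
  qed
  then have "\<bar>hdens (tensor_edges n E) X Y Z - gdens E A' B'\<bar> \<le> \<epsilon>"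
    using close AB' by blast
  ultimately show False using AB'(5) \<open>2 * \<epsilon> \<le> \<eta>\<close> by linarith
qed

definition inl_trace :: "'a set \<Rightarrow> ('a + 'b) set \<Rightarrow> 'a set" where
  "inl_trace W X = {w \<in> W. Inl w \<in> X}"

definition projected_partition :: "'a set \<Rightarrow> 'a set \<Rightarrow> ('a + 'b) set set \<Rightarrow> 'a set set" where
  "projected_partition U V Q = (inl_trace U ` Q \<union> inl_trace V ` Q) - {{}}"

lemma card_inl_trace: "card (inl_trace W X) = card (X \<inter> Inl ` W)"
proof -
  have "X \<inter> Inl ` W = Inl ` inl_trace W X" unfolding inl_trace_def by auto
  then show ?thesis by (simp add: card_image)
qed

lemma is_partition_projected_partition:
  assumes Q: "is_partition Q S" and "Inl ` (U \<union> V) \<subseteq> S" and "U \<inter> V = {}"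
  shows "is_partition (projected_partition U V Q) (U \<union> V)"
  unfolding is_partition_def
proof (intro conjI ballI impI)
  fix A assume "A \<in> projected_partition U V Q"
  then show "A \<noteq> {}" unfolding projected_partition_def by blast
next
  fix A B assume AB: "A \<in> projected_partition U V Q" "B \<in> projected_partition U V Q" "A \<noteq> B"
  then obtain X Y where XY: "X \<in> Q" "Y \<in> Q"
    "A = inl_trace U X \<or> A = inl_trace V X" "B = inl_trace U Y \<or> B = inl_trace V Y"
    unfolding projected_partition_def by blast
  have "X = Y \<or> X \<inter> Y = {}" using Q XY(1,2) unfolding is_partition_def by blast
  then show "A \<inter> B = {}"
  proof
    assume "X = Y"
    then show ?thesis using XY(3,4) AB(3) \<open>U \<inter> V = {}\<close> unfolding inl_trace_def by blast
  next
    assume "X \<inter> Y = {}"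
    then show ?thesis using XY(3,4) unfolding inl_trace_def by blast
  qed
next
  show "\<Union>(projected_partition U V Q) = U \<union> V"
  proof
    show "\<Union>(projected_partition U V Q) \<subseteq> U \<union> V"
      unfolding projected_partition_def inl_trace_def by blast
  next
    show "U \<union> V \<subseteq> \<Union>(projected_partition U V Q)"
    proof
      fix x assume x: "x \<in> U \<union> V"
      then obtain X where "X \<in> Q" "Inl x \<in> X" using Q assms(2) unfolding is_partition_def by blast
      then have "x \<in> inl_trace U X \<or> x \<in> inl_trace V X" using x unfolding inl_trace_def by blast
      then show "x \<in> \<Union>(projected_partition U V Q)"
        using \<open>X \<in> Q\<close> unfolding projected_partition_def by blast
    qed
  qed
qed

lemma card_projected_partition_le:
  assumes "finite Q" shows "card (projected_partition U V Q) \<le> 2 * card Q"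
proof -
  have "card (projected_partition U V Q) \<le> card (inl_trace U ` Q \<union> inl_trace V ` Q)"
    unfolding projected_partition_def using assms by (intro card_mono) auto
  also have "\<dots> \<le> card (inl_trace U ` Q) + card (inl_trace V ` Q)" by (rule card_Un_le)
  also have "\<dots> \<le> 2 * card Q"
    using card_image_le[OF assms, of "inl_trace U"] card_image_le[OF assms, of "inl_trace V"]
    by linarith
  finally show ?thesis .
qed

lemma sum_projected_partition_le:
  fixes g :: "'a set \<Rightarrow> real"
  assumes "finite Q" and "\<And>A. 0 \<le> g A"
  shows "sum g (projected_partition U V Q) \<le> (\<Sum>X\<in>Q. g (inl_trace U X) + g (inl_trace V X))"
proof -
  let ?TU = "inl_trace U ` Q" and ?TV = "inl_trace V ` Q"
  have "sum g (projected_partition U V Q) \<le> sum g (?TU \<union> ?TV)"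
    unfolding projected_partition_def using assms by (intro sum_mono2) auto
  also have "\<dots> \<le> sum g ?TU + sum g ?TV"
    using sum.union_inter[of ?TU ?TV g] sum_nonneg[of "?TU \<inter> ?TV" g] assms by simp
  also have "\<dots> \<le> (\<Sum>X\<in>Q. g (inl_trace U X)) + (\<Sum>X\<in>Q. g (inl_trace V X))"
    using sum_image_le[OF assms(1), of g "inl_trace U"] sum_image_le[OF assms(1), of g "inl_trace V"]
      assms(2)
    by (simp add: add_mono o_def)
  finally show ?thesis by (simp add: sum.distrib)
qed

definition cross_irregular_mass ::
    "'a set set \<Rightarrow> real \<Rightarrow> 'a set \<Rightarrow> 'a set \<Rightarrow> ('a + 'b) set set \<Rightarrow> real" where
  "cross_irregular_mass E \<eta> U V Q = (\<Sum>X\<in>Q. \<Sum>Y\<in>Q.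
     if g_regular_pair E \<eta> (inl_trace U X) (inl_trace V Y) then 0
     else real (card (inl_trace U X)) * real (card (inl_trace V Y)))"

lemma g_irregular_mass_projected_partition_le:
  assumes "bipartite U V E" "finite Q" "0 \<le> \<eta>"
  shows "g_irregular_mass E \<eta> (projected_partition U V Q) \<le> 2 * cross_irregular_mass E \<eta> U V Q"
proof -
  define f where
    "f A B = (if g_regular_pair E \<eta> A B then 0 else real (card A) * real (card B))" for A B
  let ?P = "projected_partition U V Q" and ?u = "inl_trace U" and ?v = "inl_trace V"
  have f_nonneg: "0 \<le> f A B" for A B unfolding f_def by simp
  have f_commute: "f A B = f B A" for A B unfolding f_def by (simp add: g_regular_pair_commute)
  have f_same_side: "f (inl_trace W X) (inl_trace W Y) = 0"
    if "W = U \<or> W = V" for W and X Y :: "('a + 'b) set"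
  proof -
    have "g_regular_pair E \<eta> (inl_trace W X) (inl_trace W Y)"
      using bipartite_no_edge_within_side[OF assms(1) that] assms(3)
      unfolding inl_trace_def by (intro g_regular_pair_if_edgeless) auto
    then show ?thesis unfolding f_def by simp
  qed
  have f_cross: "(f (?u X) (?u Y) + f (?u X) (?v Y)) + (f (?v X) (?u Y) + f (?v X) (?v Y))
      = f (?u X) (?v Y) + f (?u Y) (?v X)" for X Y :: "('a + 'b) set"
    using f_same_side[of U] f_same_side[of V] f_commute[of "?v X" "?u Y"] by simp
  have "g_irregular_mass E \<eta> ?P = (\<Sum>A\<in>?P. \<Sum>B\<in>?P. f A B)"
    unfolding g_irregular_mass_def f_def ..
  also have "\<dots> \<le> (\<Sum>A\<in>?P. \<Sum>Y\<in>Q. f A (?u Y) + f A (?v Y))"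
    using assms(2) f_nonneg by (intro sum_mono sum_projected_partition_le)
  also have "\<dots> = (\<Sum>Y\<in>Q. \<Sum>A\<in>?P. f A (?u Y) + f A (?v Y))" by (rule sum.swap)
  also have "\<dots> \<le> (\<Sum>Y\<in>Q. \<Sum>X\<in>Q.
      (f (?u X) (?u Y) + f (?u X) (?v Y)) + (f (?v X) (?u Y) + f (?v X) (?v Y)))"
    using assms(2) by (intro sum_mono sum_projected_partition_le add_nonneg_nonneg f_nonneg)
  also have "\<dots> = (\<Sum>Y\<in>Q. \<Sum>X\<in>Q. f (?u X) (?v Y)) + (\<Sum>Y\<in>Q. \<Sum>X\<in>Q. f (?u Y) (?v X))"
    unfolding f_cross sum.distrib ..
  also have "\<dots> = 2 * cross_irregular_mass E \<eta> U V Q"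
    using sum.swap[of "\<lambda>X Y. f (?u X) (?v Y)" Q Q]
    unfolding cross_irregular_mass_def f_def by simp
  finally show ?thesis .
qed

text \<open>Pairs are weighted by the full parts X, Y: this is what they cost in irregular triples of H.\<close>

definition thick_irregular_mass ::
    "'a set set \<Rightarrow> real \<Rightarrow> real \<Rightarrow> 'a set \<Rightarrow> 'a set \<Rightarrow> ('a + 'b) set set \<Rightarrow> real" where
  "thick_irregular_mass E \<eta> \<delta> U V Q = (\<Sum>X\<in>Q. \<Sum>Y\<in>Q.
     if \<delta> * card X \<le> card (inl_trace U X) \<and> \<delta> * card Y \<le> card (inl_trace V Y)
        \<and> \<not> g_regular_pair E \<eta> (inl_trace U X) (inl_trace V Y)
     then real (card X) * real (card Y) else 0)"

locale tensor_partition =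
  fixes U V :: "'a set" and E :: "'a set set" and n :: nat and Q :: "('a + nat) set set"
  assumes bipartite: "bipartite U V E"
    and partition: "is_partition Q (tensor_verts n U V)"
begin

abbreviation verts :: "('a + nat) set" where "verts \<equiv> tensor_verts n U V"

abbreviation new_verts :: "('a + nat) set" where "new_verts \<equiv> Inr ` {1..n}"

lemma finite_verts: "finite verts"
  using bipartite unfolding bipartite_def tensor_verts_def by simp

lemma finite_Q: "finite Q" and finite_part: "X \<in> Q \<Longrightarrow> finite X"
  using finite_partition[OF partition finite_verts] by blast+

lemma card_verts: "card verts = card U + card V + n"
proof -
  have "card verts = card (Inl ` (U \<union> V) :: ('a + nat) set) + card new_verts"
    using bipartite unfolding tensor_verts_def bipartite_def by (intro card_Un_disjoint) auto
  also have "\<dots> = card U + card V + n"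
    using bipartite unfolding bipartite_def by (simp add: card_image card_Un_disjoint)
  finally show ?thesis .
qed

lemma is_partition_projected: "is_partition (projected_partition U V Q) (U \<union> V)"
  using bipartite unfolding bipartite_def
  by (intro is_partition_projected_partition[OF partition]) (auto simp: tensor_verts_def)

lemma sum_card_parts: "(\<Sum>X\<in>Q. real (card X)) = real (card verts)"
  using sum_card_partition[OF partition finite_verts] by (simp flip: of_nat_sum)

lemma sum_card_inl_trace:
  assumes "W \<subseteq> U \<union> V" shows "(\<Sum>X\<in>Q. real (card (inl_trace W X))) = real (card W)"
proof -
  have "Inl ` W \<subseteq> verts" using assms unfolding tensor_verts_def by blast
  then have "(\<Sum>X\<in>Q. card (X \<inter> Inl ` W)) = card (Inl ` W :: ('a + nat) set)"
    by (rule sum_card_inter_partition[OF partition finite_verts])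
  then show ?thesis by (simp add: card_inl_trace card_image flip: of_nat_sum)
qed

lemma sum_card_new_verts: "(\<Sum>X\<in>Q. real (card (X \<inter> new_verts))) = real n"
proof -
  have "new_verts \<subseteq> verts" unfolding tensor_verts_def by blast
  then have "(\<Sum>X\<in>Q. card (X \<inter> new_verts)) = card new_verts"
    by (rule sum_card_inter_partition[OF partition finite_verts])
  then show ?thesis by (simp add: card_image flip: of_nat_sum)
qed

lemma card_inl_trace_le: "X \<in> Q \<Longrightarrow> card (inl_trace W X) \<le> card X"
  unfolding card_inl_trace by (intro card_mono finite_part) auto

lemma cross_irregular_mass_le:
  fixes \<delta> \<eta> :: real
  assumes "0 \<le> \<delta>"
  shows "cross_irregular_mass E \<eta> U V Q
    \<le> \<delta> * card verts * (card U + card V) + thick_irregular_mass E \<eta> \<delta> U V Q"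
proof -
  let ?u = "\<lambda>X. real (card (inl_trace U X))" and ?v = "\<lambda>X. real (card (inl_trace V X))"
  let ?irr = "\<lambda>X Y. \<not> g_regular_pair E \<eta> (inl_trace U X) (inl_trace V Y)"
  let ?thick = "\<lambda>X Y. if \<delta> * card X \<le> ?u X \<and> \<delta> * card Y \<le> ?v Y \<and> ?irr X Y
    then real (card X) * real (card Y) else 0"
  have pointwise: "(if g_regular_pair E \<eta> (inl_trace U X) (inl_trace V Y) then 0 else ?u X * ?v Y)
      \<le> \<delta> * card X * ?v Y + ?u X * (\<delta> * card Y) + ?thick X Y" if "X \<in> Q" "Y \<in> Q" for X Y
  proof -
    have "?u X \<le> card X" "?v Y \<le> card Y" using card_inl_trace_le that by simp_all
    moreover have "0 \<le> \<delta> * card X * ?v Y" "0 \<le> ?u X * (\<delta> * card Y)" using assms by simp_all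
    ultimately show ?thesis
      using mult_right_mono[of "?u X" "\<delta> * card X" "?v Y"]
        mult_left_mono[of "?v Y" "\<delta> * card Y" "?u X"] mult_mono[of "?u X" "card X" "?v Y" "card Y"]
      by (auto simp: not_le)
  qed
  have "cross_irregular_mass E \<eta> U V Q
      \<le> (\<Sum>X\<in>Q. \<Sum>Y\<in>Q. \<delta> * card X * ?v Y + ?u X * (\<delta> * card Y) + ?thick X Y)"
    unfolding cross_irregular_mass_def by (intro sum_mono pointwise)
  also have "\<dots> = \<delta> * card verts * card V + card U * (\<delta> * card verts)
      + thick_irregular_mass E \<eta> \<delta> U V Q"
    unfolding thick_irregular_mass_def sum.distrib
    by (simp add: sum_distrib_left sum_distrib_right[symmetric] sum_card_parts sum_card_inl_trace
        flip: sum_distrib_left)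
  finally show ?thesis by (simp add: algebra_simps)
qed

lemma sum_card_rich_parts_ge:
  fixes \<epsilon> :: real
  assumes "0 \<le> \<epsilon>"
  shows "real n - \<epsilon> * card verts
    \<le> (\<Sum>Z\<in>Q. if \<epsilon> * card Z \<le> card (Z \<inter> new_verts) then real (card Z) else 0)"
proof -
  have "real (card (Z \<inter> new_verts)) - \<epsilon> * card Z
      \<le> (if \<epsilon> * card Z \<le> card (Z \<inter> new_verts) then real (card Z) else 0)" if "Z \<in> Q" for Z
  proof (cases "\<epsilon> * card Z \<le> card (Z \<inter> new_verts)")
    case True
    have "card (Z \<inter> new_verts) \<le> card Z" using finite_part[OF that] by (simp add: card_mono)
    moreover have "0 \<le> \<epsilon> * card Z" using assms by simp
    ultimately show ?thesis using True by simp
  qed simp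
  then have "(\<Sum>Z\<in>Q. real (card (Z \<inter> new_verts)) - \<epsilon> * card Z)
      \<le> (\<Sum>Z\<in>Q. if \<epsilon> * card Z \<le> card (Z \<inter> new_verts) then real (card Z) else 0)"
    by (rule sum_mono)
  then show ?thesis
    using sum_card_new_verts sum_card_parts by (simp add: sum_subtractf flip: sum_distrib_left)
qed

lemma thick_irregular_mass_le:
  fixes \<epsilon> \<eta> \<delta> :: real
  assumes regular: "h_regular_partition (tensor_edges n E) verts \<epsilon> Q"
    and "0 < \<epsilon>" "2 * \<epsilon> \<le> \<eta>" "\<epsilon> \<le> \<delta>" "\<epsilon> \<le> \<eta> * \<delta>"
  shows "thick_irregular_mass E \<eta> \<delta> U V Q * (real n - \<epsilon> * card verts) \<le> \<epsilon> * real (card verts) ^ 3"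
proof -
  let ?u = "inl_trace U" and ?v = "inl_trace V"
  define thick where "thick X Y \<longleftrightarrow> \<delta> * card X \<le> card (?u X) \<and> \<delta> * card Y \<le> card (?v Y)
    \<and> \<not> g_regular_pair E \<eta> (?u X) (?v Y)" for X Y :: "('a + nat) set"
  define rich where "rich Z \<longleftrightarrow> \<epsilon> * card Z \<le> card (Z \<inter> new_verts)" for Z :: "('a + nat) set"
  have irregular: "\<not> h_regular_triple (tensor_edges n E) \<epsilon> X Y Z"
    if "thick X Y" "rich Z" "Z \<in> Q" for X Y Z
  proof -
    have thick_XY: "\<delta> * card X \<le> card (?u X)" "\<delta> * card Y \<le> card (?v Y)"
      "\<not> g_regular_pair E \<eta> (?u X) (?v Y)" using \<open>thick X Y\<close> unfolding thick_def by auto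
    have rich_Z: "\<epsilon> * card Z \<le> card (Z \<inter> new_verts)" using \<open>rich Z\<close> unfolding rich_def .
    have "Z \<noteq> {}" using partition \<open>Z \<in> Q\<close> unfolding is_partition_def by blast
    then have "0 < \<epsilon> * card Z" using \<open>0 < \<epsilon>\<close> finite_part[OF \<open>Z \<in> Q\<close>] by (simp add: card_gt_0_iff)
    then have "Z \<inter> new_verts \<noteq> {}" using rich_Z by auto
    moreover have "Inl ` ?u X \<subseteq> X" "Inl ` ?v Y \<subseteq> Y" unfolding inl_trace_def by auto
    moreover have "finite (Z \<inter> new_verts)" using finite_part[OF \<open>Z \<in> Q\<close>] by simp
    ultimately show ?thesis
      using not_h_regular_triple_if_not_g_regular_pair[OF thick_XY(3) _ _ Int_lower1 Int_lower2 _ _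
          thick_XY(1,2) rich_Z] assms(2-5) by simp
  qed
  let ?G = "\<Sum>Z\<in>Q. if rich Z then real (card Z) else 0"
  have "thick_irregular_mass E \<eta> \<delta> U V Q * ?G
    = (\<Sum>X\<in>Q. \<Sum>Y\<in>Q. (if thick X Y then real (card X) * real (card Y) else 0) * ?G)"
    unfolding thick_irregular_mass_def thick_def sum_distrib_right ..
  also have "\<dots> = (\<Sum>X\<in>Q. \<Sum>Y\<in>Q. \<Sum>Z\<in>Q.
        (if thick X Y then real (card X) * real (card Y) else 0)
        * (if rich Z then real (card Z) else 0))"
    by (simp only: sum_distrib_left)
  also have "\<dots> = (\<Sum>X\<in>Q. \<Sum>Y\<in>Q. \<Sum>Z\<in>Q. if thick X Y \<and> rich Z
        then real (card X) * real (card Y) * real (card Z) else 0)"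
    by (intro sum.cong refl) simp
  also have "\<dots> \<le> h_irregular_mass (tensor_edges n E) \<epsilon> Q"
    unfolding h_irregular_mass_def using irregular by (intro sum_mono) auto
  also have "\<dots> \<le> \<epsilon> * real (card verts) ^ 3"
    by (rule h_irregular_mass_le[OF partition finite_verts regular])
  finally have "thick_irregular_mass E \<eta> \<delta> U V Q * ?G \<le> \<epsilon> * real (card verts) ^ 3" .
  moreover have "0 \<le> thick_irregular_mass E \<eta> \<delta> U V Q"
    unfolding thick_irregular_mass_def by (intro sum_nonneg) simp
  ultimately show ?thesis
    using mult_left_mono[OF sum_card_rich_parts_ge[OF less_imp_le[OF \<open>0 < \<epsilon>\<close>]]]
    unfolding rich_def by (meson order_trans)
qed

lemma card_bounds:
  assumes "n = max (card U) (card V)" and "U \<union> V \<noteq> {}"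
  shows "1 \<le> n" "n \<le> card U + card V" "card U + card V \<le> 2 * n"
    and "card verts \<le> 3 * n" "card verts \<le> 2 * (card U + card V)"
proof -
  have "card U + card V \<noteq> 0" using assms(2) bipartite unfolding bipartite_def by auto
  then show "1 \<le> n" "n \<le> card U + card V" "card U + card V \<le> 2 * n" using assms(1) by auto
  then show "card verts \<le> 3 * n" "card verts \<le> 2 * (card U + card V)" unfolding card_verts by auto
qed

lemma thick_irregular_mass_le_card_sq:
  fixes \<epsilon> \<eta> \<delta> :: real
  assumes n: "n = max (card U) (card V)" and "U \<union> V \<noteq> {}"
    and regular: "h_regular_partition (tensor_edges n E) verts \<epsilon> Q"
    and "0 < \<epsilon>" "\<epsilon> \<le> 1/36" "2 * \<epsilon> \<le> \<eta>" "\<epsilon> \<le> \<delta>" "\<epsilon> \<le> \<eta> * \<delta>"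
  shows "thick_irregular_mass E \<eta> \<delta> U V Q \<le> 24 * \<epsilon> * real (card U + card V) ^ 2"
proof -
  define thick where "thick = thick_irregular_mass E \<eta> \<delta> U V Q"
  define m where "m = real (card U + card V)"
  define N where "N = real (card verts)"
  have bounds: "1 \<le> real n" "N \<le> 3 * n" "N \<le> 2 * m" "0 \<le> m" "0 \<le> N"
    using card_bounds[OF assms(1,2)] unfolding N_def m_def by linarith+
  have "\<epsilon> * N \<le> (1/6) * (3 * n)"
    using mult_mono[of \<epsilon> "1/6" N "3 * n"] \<open>\<epsilon> \<le> 1/36\<close> bounds by simp
  then have "n / 2 \<le> n - \<epsilon> * N" by simp
  moreover have "0 \<le> thick" unfolding thick_def thick_irregular_mass_def by (intro sum_nonneg) simp
  ultimately have "thick * (n / 2) \<le> thick * (n - \<epsilon> * N)" by (rule mult_left_mono)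
  also have "\<dots> \<le> \<epsilon> * N ^ 3"
    unfolding thick_def N_def using thick_irregular_mass_le[OF regular] assms(4-8) by simp
  also have "\<dots> \<le> \<epsilon> * ((2 * m) * (2 * m) * (3 * n))"
  proof -
    have "N * N * N \<le> (2 * m) * (2 * m) * (3 * n)" using bounds by (intro mult_mono) auto
    then show ?thesis using \<open>0 < \<epsilon>\<close> by (simp add: power3_eq_cube)
  qed
  finally have "thick * n \<le> (24 * \<epsilon> * m\<^sup>2) * n" by (simp add: power2_eq_square algebra_simps)
  then show ?thesis using bounds unfolding thick_def m_def by simp
qed

lemma g_regular_partition_projected_partition:
  fixes \<epsilon> \<delta> :: real
  assumes n: "n = max (card U) (card V)" and "U \<union> V \<noteq> {}"
    and regular: "h_regular_partition (tensor_edges n E) verts \<epsilon> Q"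
    and "0 < \<epsilon>" "36 * \<epsilon> \<le> \<delta>" "\<epsilon> \<le> \<delta>\<^sup>2" "\<delta> \<le> 1"
  shows "g_regular_partition E (U \<union> V) (36 * \<delta>) (projected_partition U V Q)"
proof -
  define m where "m = real (card U + card V)"
  have "0 \<le> \<delta>" using assms(4,5) by linarith
  have "\<delta>\<^sup>2 \<le> 36 * \<delta> * \<delta>" using \<open>0 \<le> \<delta>\<close> by (simp add: power2_eq_square)
  then have "\<epsilon> \<le> 36 * \<delta> * \<delta>" using \<open>\<epsilon> \<le> \<delta>\<^sup>2\<close> by linarith
  then have "thick_irregular_mass E (36 * \<delta>) \<delta> U V Q \<le> 24 * \<epsilon> * m\<^sup>2"
    unfolding m_def using assms(4-7)
    by (intro thick_irregular_mass_le_card_sq[OF n assms(2) regular]) auto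
  also have "\<dots> \<le> \<delta> * m\<^sup>2" using assms(4,5) by (intro mult_right_mono) auto
  finally have thick: "thick_irregular_mass E (36 * \<delta>) \<delta> U V Q \<le> \<delta> * m\<^sup>2" .
  have "\<delta> * card verts * m \<le> \<delta> * (2 * m) * m"
    using card_bounds[OF n assms(2)] \<open>0 \<le> \<delta>\<close> unfolding m_def
    by (intro mult_right_mono mult_left_mono) auto
  then have "cross_irregular_mass E (36 * \<delta>) U V Q \<le> 3 * (\<delta> * m\<^sup>2)"
    using cross_irregular_mass_le[OF \<open>0 \<le> \<delta>\<close>, of "36 * \<delta>"] thick
    unfolding m_def by (simp add: power2_eq_square algebra_simps)
  moreover have "0 \<le> \<delta> * m\<^sup>2" using \<open>0 \<le> \<delta>\<close> by simp
  ultimately have "g_irregular_mass E (36 * \<delta>) (projected_partition U V Q) \<le> 36 * \<delta> * m\<^sup>2"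
    using g_irregular_mass_projected_partition_le[OF bipartite finite_Q, of "36 * \<delta>"] \<open>0 \<le> \<delta>\<close>
    by linarith
  moreover have "m = real (card (U \<union> V))"
    using bipartite unfolding m_def bipartite_def by (simp add: card_Un_disjoint)
  moreover have "finite (U \<union> V)" using bipartite unfolding bipartite_def by simp
  ultimately show ?thesis
    using g_regular_partition_if_irregular_mass_le[OF is_partition_projected] by simp
qed

end

lemma powr_18_bounds:
  fixes \<epsilon> :: real
  assumes "0 < \<epsilon>" and "36 * \<epsilon> powr (1/18) < 1"
  shows "\<epsilon> \<le> (\<epsilon> powr (1/18))\<^sup>2" and "36 * \<epsilon> \<le> \<epsilon> powr (1/18)"
proof -
  let ?\<delta> = "\<epsilon> powr (1/18)"
  have "0 < ?\<delta>" "?\<delta> < 1" "\<epsilon> = ?\<delta> ^ 18" using assms by (simp_all add: powr_power)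
  then show "\<epsilon> \<le> ?\<delta>\<^sup>2" using power_decreasing[of 2 18 ?\<delta>] by simp
  moreover have "?\<delta>\<^sup>2 \<le> ?\<delta> * (1/36)" using \<open>0 < ?\<delta>\<close> assms(2) by (simp add: power2_eq_square)
  ultimately show "36 * \<epsilon> \<le> ?\<delta>" by simp
qed

theorem lemma5p3:
  fixes U V :: "'a set" and E :: "'a set set" and \<epsilon> :: real and t :: nat
    and Q :: "('a + nat) set set"
  assumes "0 < \<epsilon>" and "\<epsilon> < 1/3"
    and "bipartite U V E"
    and "U \<union> V \<noteq> {}"
    and "is_partition Q (tensor_verts (max (card U) (card V)) U V)"
    and "card Q = t"
    and "h_regular_partition (tensor_edges (max (card U) (card V)) E)
           (tensor_verts (max (card U) (card V)) U V) \<epsilon> Q"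
  shows "\<exists>P. is_partition P (U \<union> V) \<and> card P \<le> 2 * t + 2 \<and>
           g_regular_partition E (U \<union> V) (36 * \<epsilon> powr (1/18)) P"
proof -
  interpret tensor_partition U V E "max (card U) (card V)" Q
    using assms(3,5) by unfold_locales
  let ?P = "projected_partition U V Q"
  have "card ?P \<le> 2 * t + 2"
    using card_projected_partition_le[OF finite_Q, of U V] assms(6) by linarith
  moreover have "g_regular_partition E (U \<union> V) (36 * \<epsilon> powr (1/18)) ?P"
  proof (cases "1 \<le> 36 * \<epsilon> powr (1/18)")
    case True
    then show ?thesis by (rule g_regular_partition_if_ge_1)
  next
    case False
    then have "36 * \<epsilon> powr (1/18) < 1" "\<epsilon> powr (1/18) \<le> 1" by simp_all
    then show ?thesis
      using g_regular_partition_projected_partition[OF refl assms(4,7,1)]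
        powr_18_bounds[OF assms(1)] by blast
  qed
  ultimately show ?thesis using is_partition_projected by blast
qed

end
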